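(* Let $0<\delta\le1$ and let $t$ be a time with $\omega(t)>0$ at which the stability conditions $|\upsilon(t)/\omega(t)|\le\delta$ and $|\eta^{(n-1)}(t)/\omega^n(t)|\le\delta^n$ for $n=2,3$ hold (with $x_+$ three times continuously differentiable and nonvanishing near $t$). Let $(w_k)_{k\ge0}$ be complex numbers (the values $w_k=\widetilde\Psi_k(\omega_\psi)$) with $w_0=1$, $w_1=0$, and satisfying the wavelet suitability criteria $|w_k|\le k!\,\delta^{-k/2}$ for even $k\ge2$ and $|w_k|\le k!\,\delta^{-(k-1)/2}$ for odd $k\ge3$. For real $z$ define \[ F(z)=\sum_{m=0}^{\infty}\sum_{n=0}^{3}\sum_{p=0}^{n}\frac{(-i)^n}{(n-p)!\,p!\,m!}\,w^*_{m+n}\,\widetilde\rho_n(t)\,z^{m+p}. \] Then for every $C>0$ there is a constant $K$ depending only on $C$ such that, whenever $C\delta^{3/2}\le\frac12$ and $|z|\le C\delta^2$, the series $F(z)$ converges absolutely and \[ F(z)-F(0)=-iz\,\widetilde\rho_1(t)\,w_2^*-z\Big[\widetilde\rho_2(t)\Big(w_2^*+\tfrac12w_3^*\Big)-\tfrac{i}{6}\widetilde\rho_3(t)\,w_4^*\Big]+\tfrac12z^2w_2^*+E(z),\qquad |E(z)|\le K\delta^4. \] Here the first term is $O(\delta^2)$ and the bracketed and $z^2$ terms are $O(\delta^3)$.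
   Context: $\upsilon,\omega$ are the instantaneous bandwidth and frequency of the analytic signal $x_+$ ($\upsilon=\Re\frac{d}{dt}\ln x_+$, $\omega=\Im\frac{d}{dt}\ln x_+$), $\eta=\omega-i\upsilon$, and $\widetilde\rho_n(t)=\frac{1}{\omega^n(t)x_+(t)}\frac{d^n}{d\tau^n}[x_+(t+\tau)e^{-i\omega(t)\tau}]|_{\tau=0}$, $\widetilde\rho_0=1$. For an analytic wavelet with peak frequency $\omega_\psi$ and $\Psi(\omega_\psi)=2$, $\widetilde\Psi_k(\omega)=\omega^k\Psi^{(k)}(\omega)/\Psi(\omega)$. In the paper's notation, with $z=\Delta\omega(t,s)=s\omega(t)/\omega_\psi-1$, $F(z)$ is the main part of $W_\psi(t,s)/x_+(t)$ in the scale deviation expansion truncated at $N=3$, $F(0)-1$ is the (truncated) scale-independent perturbation $\Delta x_\psi(t)$ (the relative deviation of the localized analytic signal $W_\psi(t,\omega_\psi/\omega(t))$ from $x_+(t)$), and $F(z)-F(0)$ is the scale-dependent perturbation $\Delta W_\psi(t,s)$ apart from the transform residual; the condition $|z|\le C\delta^2$ expresses that $(t,s)$ lies in the instantaneous frequency 2-neighborhood. *)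

theory Defs
  imports "HOL-Analysis.Analysis"
begin

fun nderiv :: "nat \<Rightarrow> (real \<Rightarrow> 'a::real_normed_vector) \<Rightarrow> real \<Rightarrow> 'a" where
  "nderiv 0 f = f"
| "nderiv (Suc n) f = (\<lambda>s. vector_derivative (nderiv n f) (at s))"

text \<open>Instantaneous bandwidth and frequency of the analytic signal x:
  upsilon = Re (d/dt ln x) = Re (x'/x), omega = Im (x'/x), eta = omega - i upsilon.\<close>
definition inst_bw :: "(real \<Rightarrow> complex) \<Rightarrow> real \<Rightarrow> real" where
  "inst_bw x s = Re (nderiv 1 x s / x s)"

definition inst_freq :: "(real \<Rightarrow> complex) \<Rightarrow> real \<Rightarrow> real" where
  "inst_freq x s = Im (nderiv 1 x s / x s)"

definition inst_eta :: "(real \<Rightarrow> complex) \<Rightarrow> real \<Rightarrow> complex" where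
  "inst_eta x s = complex_of_real (inst_freq x s) - \<i> * complex_of_real (inst_bw x s)"

definition rho_tilde :: "(real \<Rightarrow> complex) \<Rightarrow> real \<Rightarrow> nat \<Rightarrow> complex" where
  "rho_tilde x t n =
     nderiv n (\<lambda>\<tau>. x (t + \<tau>) * exp (- (\<i> * complex_of_real (inst_freq x t * \<tau>)))) 0
       / (complex_of_real (inst_freq x t ^ n) * x t)"

definition F_term :: "(nat \<Rightarrow> complex) \<Rightarrow> (nat \<Rightarrow> complex) \<Rightarrow> real \<Rightarrow> nat \<Rightarrow> nat \<Rightarrow> nat \<Rightarrow> complex" where
  "F_term w \<rho> z m n p =
     (- \<i>) ^ n / of_real (fact (n - p) * fact p * fact m) * cnj (w (m + n)) * \<rho> n
       * complex_of_real z ^ (m + p)"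

definition F_ser :: "(nat \<Rightarrow> complex) \<Rightarrow> (nat \<Rightarrow> complex) \<Rightarrow> real \<Rightarrow> complex" where
  "F_ser w \<rho> z = (\<Sum>m. \<Sum>n\<le>3. \<Sum>p\<le>n. F_term w \<rho> z m n p)"

end

theory Submission
  imports Defs
begin

text \<open>
  Proof idea.  Put \<open>s = sqrt \<delta>\<close>; all estimates are powers of \<open>s\<close>.

  Differentiating \<open>x(t+\<tau>) exp(-i\<omega>\<tau>)\<close> and \<open>\<eta> = -i x'/x\<close> explicitly
  expresses \<open>\<rho>\<^sub>1, \<rho>\<^sub>2, \<rho>\<^sub>3\<close> through \<open>\<upsilon>/\<omega>\<close>, \<open>\<eta>'/\<omega>^2\<close> and \<open>\<eta>''/\<omega>^3\<close>, so the
  stability conditions give \<open>|\<rho>\<^sub>n| \<le> 5 \<delta>^n = 5 s^(2n)\<close> for \<open>n \<le> 3\<close>.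

  The wavelet criteria read \<open>|w\<^sub>k| s^k \<le> k! s^(k mod 2)\<close>, and
  \<open>|z| \<le> C s^4\<close>.  Hence the term \<open>(m,n,p)\<close> of \<open>F\<close> is at most a polynomial in \<open>m\<close>
  times \<open>C^(m+p) s^E\<close> with \<open>E = 3m + n + 4p + ((m+n) mod 2)\<close>.  Apart from nine
  leading terms (four of them make up \<open>F(0)\<close>, five the explicit perturbation) and the
  terms killed by \<open>w\<^sub>1 = 0\<close>, one has \<open>E \<ge> 8\<close>, while \<open>C s^3 \<le> 1/2\<close> gives geometric
  decay in \<open>m\<close>.  Summing yields absolute convergence and a remainder of size at most
  \<open>K(C) s^8 = K(C) \<delta>^4\<close>.
\<close>

definition deriv3_on :: "(real \<Rightarrow> 'a::real_normed_vector) \<Rightarrow> real set \<Rightarrow> bool" where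
  "deriv3_on x S \<longleftrightarrow>
     (\<forall>s\<in>S. \<forall>k<3. (nderiv k x has_vector_derivative nderiv (Suc k) x s) (at s))"

lemma deriv3_onD:
  assumes "deriv3_on x S" and "s \<in> S"
  shows "(x has_vector_derivative nderiv 1 x s) (at s)"
    and "(nderiv 1 x has_vector_derivative nderiv 2 x s) (at s)"
    and "(nderiv 2 x has_vector_derivative nderiv 3 x s) (at s)"
proof -
  have "(nderiv k x has_vector_derivative nderiv (Suc k) x s) (at s)" if "k < 3" for k
    using assms that unfolding deriv3_on_def by blast
  from this[of 0] this[of 1] this[of 2]
  show "(x has_vector_derivative nderiv 1 x s) (at s)"
    and "(nderiv 1 x has_vector_derivative nderiv 2 x s) (at s)"
    and "(nderiv 2 x has_vector_derivative nderiv 3 x s) (at s)"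
    by (simp_all only: nderiv.simps(1) numeral_nat(2,3)) simp_all
qed

lemma nderiv_Suc_on_open:
  assumes "open S" and "y \<in> S"
    and "\<And>y. y \<in> S \<Longrightarrow> nderiv k g y = f y"
    and "\<And>y. y \<in> S \<Longrightarrow> (f has_vector_derivative f' y) (at y)"
  shows "nderiv (Suc k) g y = f' y"
proof -
  have "(nderiv k g has_vector_derivative f' y) (at y)"
    using has_vector_derivative_transform_within_open[OF assms(4)[OF assms(2)] assms(1,2)] assms(3)
    by metis
  then show ?thesis by (simp add: vector_derivative_at)
qed

lemma modulated_has_vector_derivative:
  fixes \<omega> :: real
  assumes "(P has_vector_derivative P') (at \<tau>)"
  shows "((\<lambda>\<tau>. P \<tau> * exp (- (\<i> * of_real (\<omega> * \<tau>)))) has_vector_derivative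
          (P' - \<i> * \<omega> * P \<tau>) * exp (- (\<i> * of_real (\<omega> * \<tau>)))) (at \<tau>)"
proof -
  have "((\<lambda>\<tau>. - (\<i> * of_real (\<omega> * \<tau>))) has_vector_derivative - (\<i> * \<omega>)) (at \<tau>)"
    by (auto intro!: derivative_eq_intros)
  from field_vector_diff_chain_at[OF this DERIV_exp]
  have "((\<lambda>\<tau>. exp (- (\<i> * of_real (\<omega> * \<tau>)))) has_vector_derivative
          - (\<i> * \<omega>) * exp (- (\<i> * of_real (\<omega> * \<tau>)))) (at \<tau>)"
    by (simp add: o_def)
  from has_vector_derivative_mult[OF assms this] show ?thesis
    by (simp add: algebra_simps)
qed

lemma nderiv_modulated_Suc:
  fixes \<omega> :: real
  assumes "open S" and "y \<in> S"
    and "\<And>y. y \<in> S \<Longrightarrow> nderiv k h y = P y * exp (- (\<i> * of_real (\<omega> * y)))"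
    and "\<And>y. y \<in> S \<Longrightarrow> (P has_vector_derivative P' y) (at y)"
  shows "nderiv (Suc k) h y = (P' y - \<i> * \<omega> * P y) * exp (- (\<i> * of_real (\<omega> * y)))"
proof (rule nderiv_Suc_on_open[OF assms(1,2)])
  fix y assume "y \<in> S"
  show "nderiv k h y = P y * exp (- (\<i> * of_real (\<omega> * y)))" by (rule assms(3)[OF \<open>y \<in> S\<close>])
  show "((\<lambda>y. P y * exp (- (\<i> * of_real (\<omega> * y)))) has_vector_derivative
          (P' y - \<i> * \<omega> * P y) * exp (- (\<i> * of_real (\<omega> * y)))) (at y)"
    by (rule modulated_has_vector_derivative[OF assms(4)[OF \<open>y \<in> S\<close>]])
qed

text \<open>The first three derivatives at \<open>\<tau> = 0\<close> of \<open>x(t+\<tau>) exp(-i\<omega>\<tau>)\<close>, i.e. the numerators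
  of \<open>\<rho>\<^sub>1, \<rho>\<^sub>2, \<rho>\<^sub>3\<close> (Leibniz' rule, unrolled three times).\<close>
lemma nderivs_modulated_at_0:
  fixes \<omega> t e :: real and x :: "real \<Rightarrow> complex"
  defines "g \<equiv> \<lambda>\<tau>. x (t + \<tau>) * exp (- (\<i> * of_real (\<omega> * \<tau>)))"
  assumes e: "e > 0"
    and D: "deriv3_on x (ball t e)"
  shows "nderiv 1 g 0 = nderiv 1 x t - \<i> * \<omega> * x t"
    and "nderiv 2 g 0 = nderiv 2 x t - 2 * \<i> * \<omega> * nderiv 1 x t - \<omega>^2 * x t"
    and "nderiv 3 g 0 = nderiv 3 x t - 3 * \<i> * \<omega> * nderiv 2 x t - 3 * \<omega>^2 * nderiv 1 x t
                         + \<i> * \<omega>^3 * x t"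
proof -
  let ?S = "ball (0::real) e"
  let ?E = "\<lambda>\<tau>. exp (- (\<i> * of_real (\<omega> * \<tau>)))"
  define X where "X k \<tau> = nderiv k x (t + \<tau>)" for k \<tau>
  have shift: "((\<lambda>\<tau>. f (t + \<tau>)) has_vector_derivative f') (at \<tau>)"
    if "(f has_vector_derivative f') (at (t + \<tau>))" for f :: "real \<Rightarrow> complex" and f' \<tau>
  proof -
    have "((\<lambda>\<tau>. t + \<tau>) has_vector_derivative 1) (at \<tau>)"
      by (auto intro!: derivative_eq_intros)
    from vector_diff_chain_at[OF this that] show ?thesis by (simp add: o_def)
  qed
  have "t + \<tau> \<in> ball t e" if "\<tau> \<in> ?S" for \<tau> using that by (auto simp: dist_norm)
  note Dt = deriv3_onD[OF D this]
  have dX0: "(X 0 has_vector_derivative X 1 \<tau>) (at \<tau>)"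
   and dX1: "(X 1 has_vector_derivative X 2 \<tau>) (at \<tau>)"
   and dX2: "(X 2 has_vector_derivative X 3 \<tau>) (at \<tau>)" if "\<tau> \<in> ?S" for \<tau>
    unfolding X_def using shift[OF Dt(1)[OF that]] shift[OF Dt(2)[OF that]] shift[OF Dt(3)[OF that]]
    by simp_all
  have g0: "nderiv 0 g y = X 0 y * ?E y" for y by (simp add: g_def X_def)
  have g1: "nderiv 1 g y = (X 1 y - \<i> * \<omega> * X 0 y) * ?E y" if "y \<in> ?S" for y
    using nderiv_modulated_Suc[OF open_ball that g0 dX0] by simp
  have g2: "nderiv 2 g y = (X 2 y - 2 * \<i> * \<omega> * X 1 y - \<omega>^2 * X 0 y) * ?E y"
    if "y \<in> ?S" for y
  proof -
    have "((\<lambda>\<tau>. X 1 \<tau> - \<i> * \<omega> * X 0 \<tau>) has_vector_derivative X 2 y - \<i> * \<omega> * X 1 y) (at y)"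
      if "y \<in> ?S" for y
      using dX1[OF that] dX0[OF that] by (auto intro!: derivative_eq_intros)
    from nderiv_modulated_Suc[OF open_ball \<open>y \<in> ?S\<close> g1 this] show ?thesis
      by (simp add: numeral_eq_Suc algebra_simps power2_eq_square)
  qed
  have g3: "nderiv 3 g y = (X 3 y - 3 * \<i> * \<omega> * X 2 y - 3 * \<omega>^2 * X 1 y + \<i> * \<omega>^3 * X 0 y) * ?E y"
    if "y \<in> ?S" for y
  proof -
    have "((\<lambda>\<tau>. X 2 \<tau> - 2 * \<i> * \<omega> * X 1 \<tau> - \<omega>^2 * X 0 \<tau>) has_vector_derivative
            X 3 y - 2 * \<i> * \<omega> * X 2 y - \<omega>^2 * X 1 y) (at y)" if "y \<in> ?S" for y
      using dX2[OF that] dX1[OF that] dX0[OF that] by (auto intro!: derivative_eq_intros)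
    from nderiv_modulated_Suc[OF open_ball \<open>y \<in> ?S\<close> g2 this] show ?thesis
      by (simp add: numeral_eq_Suc algebra_simps power2_eq_square power3_eq_cube)
  qed
  have "0 \<in> ?S" using e by simp
  moreover have "?E 0 = 1" and "X 0 0 = x t" and "X k 0 = nderiv k x t" for k
    by (simp_all add: X_def)
  ultimately
  show "nderiv 1 g 0 = nderiv 1 x t - \<i> * \<omega> * x t"
    and "nderiv 2 g 0 = nderiv 2 x t - 2 * \<i> * \<omega> * nderiv 1 x t - \<omega>^2 * x t"
    and "nderiv 3 g 0 = nderiv 3 x t - 3 * \<i> * \<omega> * nderiv 2 x t - 3 * \<omega>^2 * nderiv 1 x t
                         + \<i> * \<omega>^3 * x t"
    using g1 g2 g3 by (simp_all only: mult_1_right)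
qed

lemma inst_eta_eq: "inst_eta x s = - \<i> * (nderiv 1 x s / x s)"
proof -
  have "complex_of_real (Im q) - \<i> * complex_of_real (Re q) = - \<i> * q" for q
    by (simp add: complex_eq_iff)
  then show ?thesis unfolding inst_eta_def inst_freq_def inst_bw_def .
qed

lemma nderivs_inst_eta:
  fixes x :: "real \<Rightarrow> complex" and t e :: real
  assumes e: "e > 0"
    and nz: "\<forall>s\<in>ball t e. x s \<noteq> 0"
    and D: "deriv3_on x (ball t e)"
  shows "nderiv 1 (inst_eta x) t = - \<i> * (nderiv 2 x t / x t - (nderiv 1 x t)^2 / (x t)^2)"
    and "nderiv 2 (inst_eta x) t = - \<i> * (nderiv 3 x t / x t - 3 * nderiv 1 x t * nderiv 2 x t / (x t)^2
                                      + 2 * (nderiv 1 x t)^3 / (x t)^3)"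
proof -
  let ?S = "ball t e"
  have d0: "(x has_vector_derivative nderiv 1 x s) (at s)"
   and d1: "(nderiv 1 x has_vector_derivative nderiv 2 x s) (at s)"
   and d2: "(nderiv 2 x has_vector_derivative nderiv 3 x s) (at s)" if "s \<in> ?S" for s
    using deriv3_onD[OF D that] by simp_all
  define I where "I s = inverse (x s)" for s
  have dI: "(I has_vector_derivative - (nderiv 1 x s * (I s * I s))) (at s)" if "s \<in> ?S" for s
    using field_vector_diff_chain_at[OF d0[OF that] DERIV_inverse[OF nz[rule_format, OF that]]]
    unfolding I_def[abs_def] by (simp add: o_def power2_eq_square)
  define H1 where "H1 s = - \<i> * (nderiv 2 x s * I s - nderiv 1 x s * nderiv 1 x s * (I s * I s))" for s
  define H2 where "H2 s = - \<i> * (nderiv 3 x s * I s - 3 * nderiv 1 x s * nderiv 2 x s * (I s * I s)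
      + 2 * nderiv 1 x s * nderiv 1 x s * nderiv 1 x s * (I s * I s * I s))" for s
  have eta0: "nderiv 0 (inst_eta x) s = - \<i> * (nderiv 1 x s * I s)" for s
    by (simp add: inst_eta_eq I_def divide_inverse del: nderiv.simps(2))
  have eta1: "nderiv 1 (inst_eta x) s = H1 s" if "s \<in> ?S" for s
  proof (rule nderiv_Suc_on_open[OF open_ball that eta0, unfolded One_nat_def[symmetric]])
    fix s assume s: "s \<in> ?S"
    show "((\<lambda>s. - \<i> * (nderiv 1 x s * I s)) has_vector_derivative H1 s) (at s)"
      unfolding H1_def
      by (rule derivative_eq_intros d1[OF s] dI[OF s] refl | simp add: algebra_simps del: nderiv.simps)+
  qed
  have eta2: "nderiv 2 (inst_eta x) s = H2 s" if "s \<in> ?S" for s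
  proof (rule nderiv_Suc_on_open[OF open_ball that eta1, unfolded Suc_1])
    fix s assume s: "s \<in> ?S"
    show "(H1 has_vector_derivative H2 s) (at s)"
      unfolding H1_def H2_def
      by (rule derivative_eq_intros d1[OF s] d2[OF s] dI[OF s] refl | simp add: algebra_simps del: nderiv.simps)+
  qed
  have t: "t \<in> ?S" using e by simp
  show "nderiv 1 (inst_eta x) t = - \<i> * (nderiv 2 x t / x t - (nderiv 1 x t)^2 / (x t)^2)"
    using eta1[OF t] nz[rule_format, OF t] unfolding H1_def I_def
    by (simp add: field_simps power2_eq_square del: nderiv.simps)
  show "nderiv 2 (inst_eta x) t = - \<i> * (nderiv 3 x t / x t - 3 * nderiv 1 x t * nderiv 2 x t / (x t)^2
                                      + 2 * (nderiv 1 x t)^3 / (x t)^3)"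
    using eta2[OF t] nz[rule_format, OF t] unfolding H2_def I_def
    by (simp add: field_simps power2_eq_square power3_eq_cube del: nderiv.simps)
qed

text \<open>Expressing \<open>\<rho>\<^sub>n\<close> through the stability quantities \<open>r = \<upsilon>/\<omega>\<close>,
  \<open>A\<^sub>1 = \<eta>'/\<omega>^2\<close> and \<open>A\<^sub>2 = \<eta>''/\<omega>^3\<close>: since \<open>x' = (\<upsilon> + i\<omega>) x\<close>, the demodulation
  cancels the leading \<open>\<omega>\<close>-powers.\<close>
lemma rho_tilde_expansion:
  fixes x :: "real \<Rightarrow> complex" and t e :: real
  defines "\<omega> \<equiv> inst_freq x t"
  defines "r \<equiv> inst_bw x t / \<omega>"
    and "A1 \<equiv> nderiv 1 (inst_eta x) t / of_real (\<omega> ^ 2)"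
    and "A2 \<equiv> nderiv 2 (inst_eta x) t / of_real (\<omega> ^ 3)"
  assumes e: "e > 0"
    and nz: "\<forall>s\<in>ball t e. x s \<noteq> 0"
    and D: "deriv3_on x (ball t e)"
    and \<omega>0: "\<omega> \<noteq> 0"
  shows "rho_tilde x t 0 = 1"
    and "rho_tilde x t 1 = of_real r"
    and "rho_tilde x t 2 = (of_real r)^2 + \<i> * A1"
    and "rho_tilde x t 3 = \<i> * A2 + (of_real r)^3 + 3 * \<i> * of_real r * A1"
proof -
  define a b c d where "a = x t" and "b = nderiv 1 x t" and "c = nderiv 2 x t" and "d = nderiv 3 x t"
  have a0: "a \<noteq> 0" using nz e unfolding a_def by simp
  have "b / a = of_real (inst_bw x t) + \<i> * of_real \<omega>"
    unfolding \<omega>_def inst_bw_def inst_freq_def a_def b_def by (simp add: complex_eq_iff)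
  then have b: "b = (of_real (r * \<omega>) + \<i> * of_real \<omega>) * a"
    using a0 \<omega>0 unfolding r_def by (simp add: field_simps)
  have \<omega>0': "complex_of_real \<omega> \<noteq> 0" using \<omega>0 by simp
  note g = nderivs_modulated_at_0[where \<omega> = \<omega>, OF e D, folded \<omega>_def a_def b_def c_def d_def]
  note \<eta> = nderivs_inst_eta[OF e nz D, folded a_def b_def c_def d_def]
  show "rho_tilde x t 0 = 1"
    using a0 unfolding rho_tilde_def a_def by simp
  show "rho_tilde x t 1 = of_real r"
    unfolding rho_tilde_def \<omega>_def[symmetric] g(1) a_def[symmetric] using a0 \<omega>0'
    by (simp add: b field_simps)
  show "rho_tilde x t 2 = (of_real r)^2 + \<i> * A1"
    unfolding rho_tilde_def \<omega>_def[symmetric] g(2) a_def[symmetric] A1_def \<eta>(1) using a0 \<omega>0'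
    by (simp add: b field_simps power2_eq_square)
  show "rho_tilde x t 3 = \<i> * A2 + (of_real r)^3 + 3 * \<i> * of_real r * A1"
    unfolding rho_tilde_def \<omega>_def[symmetric] g(3) a_def[symmetric] A1_def A2_def \<eta> using a0 \<omega>0'
    by (simp add: b field_simps power2_eq_square power3_eq_cube)
qed

text \<open>Under the stability conditions, \<open>|\<rho>\<^sub>n| \<le> 5\<delta>^n\<close> for \<open>n \<le> 3\<close> (in fact \<open>|\<rho>\<^sub>1| \<le> \<delta>\<close>,
  \<open>|\<rho>\<^sub>2| \<le> 2\<delta>^2\<close>, \<open>|\<rho>\<^sub>3| \<le> 5\<delta>^3\<close>).\<close>
lemma rho_tilde_bounds:
  fixes x :: "real \<Rightarrow> complex" and t e \<delta> :: real
  assumes e: "e > 0" and nz: "\<forall>s\<in>ball t e. x s \<noteq> 0" and D: "deriv3_on x (ball t e)"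
    and \<omega>0: "inst_freq x t \<noteq> 0"
    and bw: "\<bar>inst_bw x t / inst_freq x t\<bar> \<le> \<delta>"
    and \<eta>1: "norm (nderiv 1 (inst_eta x) t / of_real (inst_freq x t ^ 2)) \<le> \<delta> ^ 2"
    and \<eta>2: "norm (nderiv 2 (inst_eta x) t / of_real (inst_freq x t ^ 3)) \<le> \<delta> ^ 3"
    and n: "n \<le> 3"
  shows "norm (rho_tilde x t n) \<le> 5 * \<delta> ^ n"
proof -
  define r where "r = inst_bw x t / inst_freq x t"
  define A1 where "A1 = nderiv 1 (inst_eta x) t / of_real (inst_freq x t ^ 2)"
  define A2 where "A2 = nderiv 2 (inst_eta x) t / of_real (inst_freq x t ^ 3)"
  note \<rho> = rho_tilde_expansion[OF e nz D \<omega>0, folded r_def A1_def A2_def]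
  have r: "\<bar>r\<bar> \<le> \<delta>" using bw unfolding r_def .
  then have "0 \<le> \<delta>" by linarith
  have "norm (rho_tilde x t 2) \<le> \<bar>r\<bar> ^ 2 + norm A1"
    unfolding \<rho>(3) using norm_triangle_ineq[of "(of_real r)\<^sup>2" "\<i> * A1"]
    by (simp add: norm_mult norm_power)
  also have "\<dots> \<le> \<delta> ^ 2 + \<delta> ^ 2"
    using r \<eta>1 \<open>0 \<le> \<delta>\<close> unfolding A1_def by (intro add_mono power_mono) auto
  finally have \<rho>2: "norm (rho_tilde x t 2) \<le> 2 * \<delta> ^ 2" by simp
  have "norm (rho_tilde x t 3) \<le> norm A2 + \<bar>r\<bar> ^ 3 + 3 * \<bar>r\<bar> * norm A1"
    unfolding \<rho>(4)
    using norm_triangle_ineq[of "\<i> * A2 + (of_real r) ^ 3" "3 * \<i> * of_real r * A1"]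
      norm_triangle_ineq[of "\<i> * A2" "(of_real r) ^ 3"]
    by (simp add: norm_mult norm_power)
  also have "\<dots> \<le> \<delta> ^ 3 + \<delta> ^ 3 + 3 * \<delta> * \<delta> ^ 2"
    using r \<eta>1 \<eta>2 \<open>0 \<le> \<delta>\<close> unfolding A1_def A2_def
    by (intro add_mono power_mono mult_mono) auto
  finally have \<rho>3: "norm (rho_tilde x t 3) \<le> 5 * \<delta> ^ 3"
    by (simp add: power2_eq_square power3_eq_cube)
  have "n \<in> {0, 1, 2, 3}" using n by auto
  moreover have "norm (rho_tilde x t 2) \<le> 5 * \<delta> ^ 2"
    using \<rho>2 zero_le_power[OF \<open>0 \<le> \<delta>\<close>, of 2] by linarith
  ultimately show ?thesis using \<rho>(1,2) \<rho>3 r by auto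
qed

lemma wavelet_criteria_sqrt:
  fixes \<delta> :: real and w :: "nat \<Rightarrow> complex"
  assumes \<delta>: "\<delta> > 0" and w0: "w 0 = 1" and w1: "w 1 = 0"
    and even_crit: "\<forall>k. even k \<and> k \<ge> 2 \<longrightarrow> norm (w k) \<le> fact k * \<delta> powr (- real k / 2)"
    and odd_crit: "\<forall>k. odd k \<and> k \<ge> 3 \<longrightarrow> norm (w k) \<le> fact k * \<delta> powr (- (real k - 1) / 2)"
  shows "norm (w k) * sqrt \<delta> ^ k \<le> fact k * sqrt \<delta> ^ (k mod 2)"
proof -
  define s where "s = sqrt \<delta>"
  have s: "s > 0" using \<delta> unfolding s_def by simp
  have pw: "\<delta> powr (- real j / 2) = inverse (s ^ j)" for j
  proof -
    have "s ^ j = (\<delta> powr (1/2)) powr real j"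
      using \<delta> s by (simp add: s_def powr_half_sqrt powr_realpow)
    also have "\<dots> = \<delta> powr (real j / 2)" by (simp add: powr_powr)
    finally show ?thesis by (simp add: powr_minus)
  qed
  have "k = 0 \<or> k = 1 \<or> (even k \<and> k \<ge> 2) \<or> (odd k \<and> k \<ge> 3)" by presburger
  then consider "k = 0" | "k = 1" | "even k" "k \<ge> 2" | "odd k" "k \<ge> 3" by blast
  then show ?thesis
  proof cases
    case 3
    then have "norm (w k) \<le> fact k * inverse (s ^ k)" using even_crit pw by auto
    then show ?thesis using s 3 by (simp add: s_def[symmetric] field_simps)
  next
    case 4
    then have "norm (w k) \<le> fact k * inverse (s ^ (k - 1))"
      using odd_crit pw[of "k - 1"] by (auto simp: of_nat_diff)
    moreover have "s ^ k = s ^ (k - 1) * s" using 4 by (simp add: power_Suc2[symmetric])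
    ultimately show ?thesis using s 4 by (simp add: s_def[symmetric] field_simps odd_iff_mod_2_eq_one)
  qed (use w0 w1 \<delta> in auto)
qed

text \<open>The power of \<open>s = sqrt \<delta>\<close> controlling the term \<open>(m,n,p)\<close> of \<open>F\<close>: the wavelet factor
  contributes \<open>s^-(m+n)\<close> (up to parity), \<open>\<rho>\<^sub>n\<close> contributes \<open>s^(2n)\<close>, \<open>z^(m+p)\<close> contributes \<open>s^(4(m+p))\<close>.\<close>
definition term_order :: "nat \<Rightarrow> nat \<Rightarrow> nat \<Rightarrow> nat" where
  "term_order m n p = 3 * m + n + 4 * p + (m + n) mod 2"

lemma fact_add_le: "fact (m + n) \<le> (fact m :: nat) * (m + n) ^ n"
proof (induction n)
  case 0
  then show ?case by simp
next
  case (Suc n)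
  have "fact (m + Suc n) = (m + Suc n) * (fact (m + n) :: nat)" by simp
  also have "\<dots> \<le> (m + Suc n) * (fact m * (m + n) ^ n)" using Suc.IH by (rule mult_le_mono2)
  also have "\<dots> \<le> (m + Suc n) * (fact m * (m + Suc n) ^ n)"
    by (intro mult_le_mono2 power_mono) auto
  also have "\<dots> = fact m * (m + Suc n) ^ Suc n" by (simp add: algebra_simps)
  finally show ?case .
qed

lemma F_coeff_le:
  assumes "n \<le> 3"
  shows "fact (m + n) / (fact (n - p) * fact p * fact m) \<le> (real m + 3) ^ 3"
proof -
  have "real (fact (m + n)) \<le> real (fact m * (m + n) ^ n)"
    using fact_add_le[of m n] by (simp only: of_nat_le_iff)
  also have "\<dots> = fact m * (real m + real n) ^ n" by simp
  also have "\<dots> \<le> fact m * (real m + 3) ^ 3"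
  proof -
    have "(real m + real n) ^ n \<le> (real m + 3) ^ n" using assms by (intro power_mono) auto
    also have "\<dots> \<le> (real m + 3) ^ 3" using assms by (intro power_increasing) auto
    finally show ?thesis by simp
  qed
  finally have "fact (m + n) / fact m \<le> (real m + 3) ^ 3"
    by (simp add: divide_le_eq mult.commute)
  moreover have "fact (m + n) / (fact (n - p) * fact p * fact m) \<le> (fact (m + n) :: real) / fact m"
  proof (rule divide_left_mono)
    have "1 \<le> (fact (n - p) * fact p :: real)" by (intro mult_ge1_I fact_ge_1)
    then show "fact m \<le> (fact (n - p) * fact p * fact m :: real)" by simp
  qed auto
  ultimately show ?thesis by linarith
qed

lemma F_term_norm_le:
  fixes s C z :: real and w \<rho> :: "nat \<Rightarrow> complex"
  assumes s: "0 < s" and W: "norm (w (m + n)) * s ^ (m + n) \<le> fact (m + n) * s ^ ((m + n) mod 2)"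
    and R: "norm (\<rho> n) \<le> 5 * s ^ (2 * n)"
    and z: "\<bar>z\<bar> \<le> C * s ^ 4"
  shows "norm (F_term w \<rho> z m n p)
           \<le> 5 * (fact (m + n) / (fact (n - p) * fact p * fact m)) * C ^ (m + p) * s ^ term_order m n p"
proof -
  define D :: real where "D = fact (n - p) * fact p * fact m"
  define k where "k = m + n"
  have "D > 0" unfolding D_def by simp
  have wk: "norm (w k) \<le> fact k * s ^ (k mod 2) / s ^ k"
    using W s unfolding k_def by (simp add: field_simps)
  have zz: "\<bar>z\<bar> ^ (m + p) \<le> (C * s ^ 4) ^ (m + p)" using z by (intro power_mono) auto
  have "norm (F_term w \<rho> z m n p) = norm (w k) * norm (\<rho> n) * \<bar>z\<bar> ^ (m + p) / D"
    unfolding F_term_def D_def k_def by (simp add: norm_mult norm_divide norm_power)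
  also have "\<dots> \<le> (fact k * s ^ (k mod 2) / s ^ k) * (5 * s ^ (2 * n)) * (C * s ^ 4) ^ (m + p) / D"
    using \<open>D > 0\<close> wk R zz s by (intro divide_right_mono mult_mono) auto
  also have "(C * s ^ 4) ^ (m + p) = C ^ (m + p) * s ^ (4 * (m + p))"
    by (simp only: power_mult_distrib power_mult[symmetric] mult.commute)
  also have "(fact k * s ^ (k mod 2) / s ^ k) * (5 * s ^ (2 * n)) * (C ^ (m + p) * s ^ (4 * (m + p))) / D
      = 5 * (fact k / D) * C ^ (m + p) * (s ^ (k mod 2 + 2 * n + 4 * (m + p)) / s ^ k)"
    by (simp add: field_simps power_add)
  also have "s ^ (k mod 2 + 2 * n + 4 * (m + p)) = s ^ term_order m n p * s ^ k"
    unfolding term_order_def k_def power_add[symmetric] by (rule arg_cong[where f = "power s"]) simp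
  finally show ?thesis using s unfolding D_def k_def by simp
qed

text \<open>The terms that are not of order \<open>\<delta>^4\<close>: those with \<open>m = p = 0\<close> make up \<open>F(0)\<close>,
  the other five form the explicit part of the scale-dependent perturbation.\<close>
definition leading_term :: "nat \<Rightarrow> nat \<Rightarrow> nat \<Rightarrow> bool" where
  "leading_term m n p \<longleftrightarrow> (m = 0 \<and> p = 0) \<or> (m = 1 \<and> n = 1 \<and> p = 0) \<or> (m = 2 \<and> n = 0 \<and> p = 0)
     \<or> (m = 0 \<and> n = 2 \<and> p = 1) \<or> (m = 1 \<and> n = 2 \<and> p = 0) \<or> (m = 1 \<and> n = 3 \<and> p = 0)"

text \<open>Every other term with \<open>m + n \<noteq> 1\<close> has order at least \<open>s^8 = \<delta>^4\<close>
  (terms with \<open>m + n = 1\<close> vanish because \<open>w\<^sub>1 = 0\<close>).\<close>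
lemma term_order_ge_8:
  assumes "n \<le> 3" "p \<le> n" "\<not> leading_term m n p" "m + n \<noteq> 1"
  shows "8 \<le> term_order m n p"
proof (cases "m \<le> 2")
  case True
  have "\<forall>m\<in>{0,1,2}. \<forall>n\<in>{0,1,2,3}. \<forall>p\<in>{0,1,2,3}.
      p \<le> n \<longrightarrow> \<not> leading_term m n p \<longrightarrow> m + n \<noteq> 1 \<longrightarrow> 8 \<le> term_order m n p"
    by (simp add: leading_term_def term_order_def)
  moreover have "m \<in> {0,1,2}" "n \<in> {0,1,2,3}" "p \<in> {0,1,2,3}" using True assms by auto
  ultimately show ?thesis using assms by blast
qed (auto simp: term_order_def)

lemma geometric_power_bound:
  fixes s C :: real
  assumes s: "0 < s" "s \<le> 1" and C: "C > 0" and q: "C * s ^ 3 \<le> 1/2"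
    and p: "p \<le> 3" and E: "8 \<le> E" "3 * m \<le> E"
  shows "C ^ (m + p) * s ^ E \<le> 8 * max 1 C ^ 6 * s ^ 8 * (1/2) ^ m"
proof -
  define M where "M = max 1 C"
  have M: "1 \<le> M" "C \<le> M" unfolding M_def by auto
  have CM: "C ^ k \<le> M ^ j" if "k \<le> j" for k j
  proof -
    have "C ^ k \<le> M ^ k" using C M by (intro power_mono) auto
    also have "\<dots> \<le> M ^ j" using M that by (intro power_increasing) auto
    finally show ?thesis .
  qed
  show ?thesis
  proof (cases "m \<le> 2")
    case True
    have "C ^ (m + p) \<le> M ^ 6" using True p by (intro CM) simp
    moreover have "s ^ E \<le> s ^ 8" using s E by (intro power_decreasing) auto
    moreover have "(1/2::real) ^ 2 \<le> (1/2) ^ m" using True by (intro power_decreasing) auto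
    ultimately have "C ^ (m + p) * s ^ E \<le> M ^ 6 * s ^ 8 * 1"
      using C s M by (simp add: mult_mono)
    also have "\<dots> \<le> M ^ 6 * s ^ 8 * (8 * (1/2) ^ m)"
      using M s \<open>(1/2::real) ^ 2 \<le> (1/2) ^ m\<close> by (intro mult_left_mono) (auto simp: power2_eq_square)
    also have "\<dots> = 8 * M ^ 6 * s ^ 8 * (1/2) ^ m" by simp
    finally show ?thesis unfolding M_def .
  next
    case False
    then have m: "m = 3 + (m - 3)" by simp
    have "C ^ (m + p) * s ^ E \<le> C ^ m * s ^ (3 * m) * C ^ p"
      using s C E by (simp add: power_add mult_left_mono power_decreasing)
    also have "C ^ m * s ^ (3 * m) = (C * s ^ 3) ^ 3 * (C * s ^ 3) ^ (m - 3)"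
      by (subst (1 2) m) (simp only: power_add power_mult power_mult_distrib mult_ac)
    also have "(C * s ^ 3) ^ 3 * (C * s ^ 3) ^ (m - 3) * C ^ p
        \<le> (C ^ 3 * s ^ 9) * (1/2) ^ (m - 3) * M ^ 3"
      using C s q CM[OF p] by (intro mult_mono power_mono) (auto simp: power_mult_distrib power_mult[symmetric])
    also have "(1/2::real) ^ (m - 3) = 8 * (1/2) ^ m"
      by (subst (2) m) (simp add: power_add power3_eq_cube)
    also have "C ^ 3 * s ^ 9 * (8 * (1/2) ^ m) * M ^ 3 \<le> M ^ 3 * s ^ 8 * (8 * (1/2) ^ m) * M ^ 3"
      using C M s by (intro mult_right_mono mult_mono power_mono power_decreasing) auto
    also have "\<dots> = 8 * M ^ 6 * s ^ 8 * (1/2) ^ m" by (simp add: power_add[symmetric] mult_ac)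
    finally show ?thesis unfolding M_def .
  qed
qed

lemma F_term_tail_bound:
  fixes s C z :: real and w \<rho> :: "nat \<Rightarrow> complex"
  assumes s: "0 < s" "s \<le> 1" and C: "C > 0" and q: "C * s ^ 3 \<le> 1/2"
    and W: "\<And>k. norm (w k) * s ^ k \<le> fact k * s ^ (k mod 2)" and w1: "w 1 = 0"
    and R: "norm (\<rho> n) \<le> 5 * s ^ (2 * n)" and z: "\<bar>z\<bar> \<le> C * s ^ 4"
    and np: "n \<le> 3" "p \<le> n" and tail: "\<not> leading_term m n p"
  shows "norm (F_term w \<rho> z m n p) \<le> 40 * max 1 C ^ 6 * s ^ 8 * ((real m + 3) ^ 3 * (1/2) ^ m)"
proof (cases "m + n = 1")
  case True
  then have "F_term w \<rho> z m n p = 0" using w1 unfolding F_term_def by simp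
  then show ?thesis by simp
next
  case False
  have "norm (F_term w \<rho> z m n p)
          \<le> 5 * (fact (m + n) / (fact (n - p) * fact p * fact m)) * (C ^ (m + p) * s ^ term_order m n p)"
    using F_term_norm_le[where w = w and \<rho> = \<rho> and p = p, OF s(1) W R z] by (simp add: mult_ac)
  also have "\<dots> \<le> 5 * (real m + 3) ^ 3 * (8 * max 1 C ^ 6 * s ^ 8 * (1/2) ^ m)"
  proof (rule mult_mono)
    show "5 * (fact (m + n) / (fact (n - p) * fact p * fact m)) \<le> 5 * (real m + 3) ^ 3"
      using F_coeff_le[OF np(1), of m p] by linarith
    show "C ^ (m + p) * s ^ term_order m n p \<le> 8 * max 1 C ^ 6 * s ^ 8 * (1/2) ^ m"
      using term_order_ge_8[OF np tail False] np
      by (intro geometric_power_bound[OF s C q]) (auto simp: term_order_def)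
  qed (use C s in auto)
  finally show ?thesis by (simp add: mult_ac)
qed

lemma summable_cubic_geometric: "summable (\<lambda>m. (real m + 3) ^ 3 * (1/2::real) ^ m)"
proof (rule summable_ratio_test[where c = "3/4" and N = 4])
  fix n :: nat assume "n \<ge> 4"
  define k where "k = real n - 4"
  have k: "real n = k + 4" "k \<ge> 0" using \<open>n \<ge> 4\<close> unfolding k_def by auto
  have "0 \<le> k * (k * k)" "0 \<le> k * (k * 15)" "0 \<le> k * 57" using k by auto
  then have "2 * (real n + 4) ^ 3 \<le> 3 * (real n + 3) ^ 3"
    unfolding k by (simp add: power3_eq_cube algebra_simps)
  then show "norm ((real (Suc n) + 3) ^ 3 * (1/2::real) ^ Suc n)
      \<le> 3/4 * norm ((real n + 3) ^ 3 * (1/2::real) ^ n)"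
    by (simp add: add.commute add.left_commute)
qed simp

lemma leading_terms_sum:
  assumes "\<rho> 0 = 1"
  shows "(\<Sum>m<3. \<Sum>n\<le>3. \<Sum>p\<le>n. if leading_term m n p then F_term w \<rho> z m n p else 0)
    = (\<Sum>n\<le>3. \<Sum>p\<le>n. F_term w \<rho> 0 0 n p)
      + (- \<i> * of_real z * \<rho> 1 * cnj (w 2)
         - of_real z * (\<rho> 2 * (cnj (w 2) + cnj (w 3) / 2) - \<i> / 6 * \<rho> 3 * cnj (w 4))
         + (of_real z)\<^sup>2 * cnj (w 2) / 2)"
proof -
  have "(\<Sum>m<3. \<Sum>n\<le>3. \<Sum>p\<le>n. if leading_term m n p then F_term w \<rho> z m n p else 0)
      = (\<Sum>n\<le>3. F_term w \<rho> z 0 n 0) + (F_term w \<rho> z 0 2 1 + F_term w \<rho> z 1 1 0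
          + F_term w \<rho> z 2 0 0 + F_term w \<rho> z 1 2 0 + F_term w \<rho> z 1 3 0)"
    by (simp add: lessThan_nat_numeral atMost_nat_numeral leading_term_def)
  also have "(\<Sum>n\<le>3. F_term w \<rho> z 0 n 0) = (\<Sum>n\<le>3. \<Sum>p\<le>n. F_term w \<rho> 0 0 n p)"
    by (simp add: atMost_nat_numeral F_term_def)
  also have "F_term w \<rho> z 0 2 1 + F_term w \<rho> z 1 1 0 + F_term w \<rho> z 2 0 0
      + F_term w \<rho> z 1 2 0 + F_term w \<rho> z 1 3 0
    = - \<i> * of_real z * \<rho> 1 * cnj (w 2)
         - of_real z * (\<rho> 2 * (cnj (w 2) + cnj (w 3) / 2) - \<i> / 6 * \<rho> 3 * cnj (w 4))
         + (of_real z)\<^sup>2 * cnj (w 2) / 2"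
    using assms by (simp add: F_term_def fact_numeral power2_eq_square power3_eq_cube)
      (simp add: field_simps eval_nat_numeral)
  finally show ?thesis .
qed

lemma F_ser_at_0: "F_ser w \<rho> 0 = (\<Sum>n\<le>3. \<Sum>p\<le>n. F_term w \<rho> 0 0 n p)"
proof -
  have "F_ser w \<rho> 0 = (\<Sum>m\<in>{0}. \<Sum>n\<le>3. \<Sum>p\<le>n. F_term w \<rho> 0 m n p)"
    unfolding F_ser_def by (rule suminf_finite) (auto simp: F_term_def power_0_left)
  then show ?thesis by simp
qed

lemma norm_triangle_sum_le:
  fixes f :: "nat \<Rightarrow> nat \<Rightarrow> 'a::real_normed_vector"
  assumes "\<And>n p. n \<le> 3 \<Longrightarrow> p \<le> n \<Longrightarrow> norm (f n p) \<le> b"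
  shows "norm (\<Sum>n\<le>3. \<Sum>p\<le>n. f n p) \<le> 10 * b"
proof -
  have "norm (\<Sum>n\<le>3. \<Sum>p\<le>n. f n p) \<le> (\<Sum>n\<le>3. \<Sum>p\<le>n. norm (f n p))"
    by (intro order.trans[OF norm_sum] sum_mono norm_sum)
  also have "\<dots> \<le> (\<Sum>n\<le>(3::nat). \<Sum>p\<le>n. b)"
    using assms by (intro sum_mono) auto
  also have "\<dots> = 10 * b" by (simp add: atMost_nat_numeral)
  finally show ?thesis .
qed

definition deviation_const :: "real \<Rightarrow> real" where
  "deviation_const C = 400 * max 1 C ^ 6 * (\<Sum>m. (real m + 3) ^ 3 * (1/2::real) ^ m)"

lemma F_ser_deviation:
  fixes s C z :: real and w \<rho> :: "nat \<Rightarrow> complex"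
  assumes s: "0 < s" "s \<le> 1" and C: "C > 0" and q: "C * s ^ 3 \<le> 1/2"
    and W: "\<And>k. norm (w k) * s ^ k \<le> fact k * s ^ (k mod 2)" and w1: "w 1 = 0"
    and \<rho>0: "\<rho> 0 = 1" and R: "\<And>n. n \<le> 3 \<Longrightarrow> norm (\<rho> n) \<le> 5 * s ^ (2 * n)"
    and z: "\<bar>z\<bar> \<le> C * s ^ 4"
  shows "summable (\<lambda>m. \<Sum>n\<le>3. \<Sum>p\<le>n. norm (F_term w \<rho> z m n p))"
    and "norm (F_ser w \<rho> z - F_ser w \<rho> 0
               - (- \<i> * of_real z * \<rho> 1 * cnj (w 2)
                  - of_real z * (\<rho> 2 * (cnj (w 2) + cnj (w 3) / 2) - \<i> / 6 * \<rho> 3 * cnj (w 4))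
                  + (of_real z)\<^sup>2 * cnj (w 2) / 2))
         \<le> deviation_const C * s ^ 8"
proof -
  define B where "B m = 40 * max 1 C ^ 6 * s ^ 8 * ((real m + 3) ^ 3 * (1/2::real) ^ m)" for m
  have sumB: "summable (\<lambda>m. 10 * B m)"
    unfolding B_def by (intro summable_mult summable_cubic_geometric)
  have tail_bound: "norm (F_term w \<rho> z m n p) \<le> B m"
    if "n \<le> 3" "p \<le> n" "\<not> leading_term m n p" for m n p
    unfolding B_def by (rule F_term_tail_bound[where w = w and \<rho> = \<rho>, OF s C q W w1 R[OF that(1)] z that])
  define L where "L m = (\<Sum>n\<le>3. \<Sum>p\<le>n. if leading_term m n p then F_term w \<rho> z m n p else 0)" for m
  define T where "T m = (\<Sum>n\<le>3. \<Sum>p\<le>n. if leading_term m n p then 0 else F_term w \<rho> z m n p)" for m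
  have T_bound: "norm (T m) \<le> 10 * B m" for m
    unfolding T_def using tail_bound by (intro norm_triangle_sum_le) (auto simp: B_def)
  have sumT: "summable (\<lambda>m. norm (T m))"
    by (rule summable_comparison_test'[OF sumB]) (use T_bound in auto)
  have L_vanish: "L m = 0" if "m \<notin> {..<3}" for m
    using that unfolding L_def leading_term_def by auto
  have "F_ser w \<rho> z = (\<Sum>m. L m + T m)"
    unfolding F_ser_def L_def T_def sum.distrib[symmetric] by (intro suminf_cong sum.cong refl) auto
  also have "\<dots> = (\<Sum>m<3. L m) + (\<Sum>m. T m)"
    using suminf_add[OF summable_finite[of "{..<3}" L] summable_norm_cancel[OF sumT]]
      suminf_finite[of "{..<3}" L] L_vanish by simp
  finally have "F_ser w \<rho> z - F_ser w \<rho> 0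
               - (- \<i> * of_real z * \<rho> 1 * cnj (w 2)
                  - of_real z * (\<rho> 2 * (cnj (w 2) + cnj (w 3) / 2) - \<i> / 6 * \<rho> 3 * cnj (w 4))
                  + (of_real z)\<^sup>2 * cnj (w 2) / 2) = (\<Sum>m. T m)"
    unfolding F_ser_at_0 L_def leading_terms_sum[where \<rho> = \<rho> and w = w and z = z, OF \<rho>0] by simp
  moreover have "norm (\<Sum>m. T m) \<le> deviation_const C * s ^ 8"
  proof -
    have "norm (\<Sum>m. T m) \<le> (\<Sum>m. norm (T m))" by (rule summable_norm[OF sumT])
    also have "\<dots> \<le> (\<Sum>m. 10 * B m)" by (rule suminf_le[OF T_bound sumT sumB])
    also have "\<dots> = deviation_const C * s ^ 8"
      unfolding B_def deviation_const_def
      using suminf_mult[OF summable_cubic_geometric, of "400 * max 1 C ^ 6 * s ^ 8"]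
      by (simp add: mult_ac)
    finally show ?thesis .
  qed
  ultimately show "norm (F_ser w \<rho> z - F_ser w \<rho> 0
               - (- \<i> * of_real z * \<rho> 1 * cnj (w 2)
                  - of_real z * (\<rho> 2 * (cnj (w 2) + cnj (w 3) / 2) - \<i> / 6 * \<rho> 3 * cnj (w 4))
                  + (of_real z)\<^sup>2 * cnj (w 2) / 2))
         \<le> deviation_const C * s ^ 8" by simp
  show "summable (\<lambda>m. \<Sum>n\<le>3. \<Sum>p\<le>n. norm (F_term w \<rho> z m n p))"
  proof (rule summable_comparison_test'[OF sumB, where N = 3])
    fix m :: nat assume "m \<ge> 3"
    then show "norm (\<Sum>n\<le>3. \<Sum>p\<le>n. norm (F_term w \<rho> z m n p)) \<le> 10 * B m"
      using tail_bound by (intro norm_triangle_sum_le) (auto simp: leading_term_def)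
  qed
qed

lemma scale_deviation_estimate:
  fixes C \<delta> t z e :: real and x :: "real \<Rightarrow> complex" and w :: "nat \<Rightarrow> complex"
  assumes C: "C > 0" and \<delta>: "0 < \<delta>" "\<delta> \<le> 1"
    and e: "e > 0" and nz: "\<forall>s\<in>ball t e. x s \<noteq> 0" and D: "deriv3_on x (ball t e)"
    and \<omega>: "inst_freq x t > 0"
    and bw: "\<bar>inst_bw x t / inst_freq x t\<bar> \<le> \<delta>"
    and \<eta>: "\<forall>n\<in>{2,3}. norm (nderiv (n - 1) (inst_eta x) t / of_real (inst_freq x t ^ n)) \<le> \<delta> ^ n"
    and w0: "w 0 = 1" and w1: "w 1 = 0"
    and even_crit: "\<forall>k. even k \<and> k \<ge> 2 \<longrightarrow> norm (w k) \<le> fact k * \<delta> powr (- real k / 2)"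
    and odd_crit: "\<forall>k. odd k \<and> k \<ge> 3 \<longrightarrow> norm (w k) \<le> fact k * \<delta> powr (- (real k - 1) / 2)"
    and small: "C * \<delta> powr (3/2) \<le> 1/2"
    and z: "\<bar>z\<bar> \<le> C * \<delta>\<^sup>2"
  shows "summable (\<lambda>m. \<Sum>n\<le>3. \<Sum>p\<le>n. norm (F_term w (rho_tilde x t) z m n p))
    \<and> norm (F_ser w (rho_tilde x t) z - F_ser w (rho_tilde x t) 0
          - (- \<i> * of_real z * rho_tilde x t 1 * cnj (w 2)
             - of_real z * (rho_tilde x t 2 * (cnj (w 2) + cnj (w 3) / 2) - \<i> / 6 * rho_tilde x t 3 * cnj (w 4))
             + (of_real z)\<^sup>2 * cnj (w 2) / 2))
        \<le> deviation_const C * \<delta> ^ 4"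
proof -
  define s where "s = sqrt \<delta>"
  have s: "0 < s" "s \<le> 1" and \<delta>s: "\<delta> = s ^ 2" using \<delta> unfolding s_def by auto
  have R: "norm (rho_tilde x t n) \<le> 5 * s ^ (2 * n)" if "n \<le> 3" for n
    using rho_tilde_bounds[OF e nz D _ bw _ _ that] \<omega> \<eta> by (simp add: \<delta>s power_mult)
  have W: "norm (w k) * s ^ k \<le> fact k * s ^ (k mod 2)" for k
    unfolding s_def by (rule wavelet_criteria_sqrt[OF \<delta>(1) w0 w1 even_crit odd_crit])
  have "s ^ 3 = (\<delta> powr (1/2)) powr 3"
    using \<delta> s by (simp add: s_def powr_half_sqrt powr_realpow)
  then have "\<delta> powr (3/2) = s ^ 3" by (simp add: powr_powr)
  then have q: "C * s ^ 3 \<le> 1/2" using small by simp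
  have z': "\<bar>z\<bar> \<le> C * s ^ 4" using z by (simp add: \<delta>s power_mult[symmetric])
  have \<rho>0: "rho_tilde x t 0 = 1" using rho_tilde_expansion(1)[OF e nz D] \<omega> by simp
  from F_ser_deviation[OF s C q W w1 \<rho>0 R z'] show ?thesis
    by (simp add: \<delta>s power_mult[symmetric])
qed

text \<open>The main theorem, with \<open>K = deviation_const C\<close>.\<close>
theorem theorem4:
  shows "\<forall>C::real. C > 0 \<longrightarrow> (\<exists>K::real. \<forall>(\<delta>::real) (x::real \<Rightarrow> complex) (t::real) (w::nat \<Rightarrow> complex) (z::real).
     (0 < \<delta> \<and> \<delta> \<le> 1
      \<and> (\<exists>e>0. (\<forall>s\<in>ball t e. x s \<noteq> 0
                   \<and> (\<forall>k<3. (nderiv k x has_vector_derivative nderiv (Suc k) x s) (at s)))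
               \<and> continuous_on (ball t e) (nderiv 3 x))
      \<and> inst_freq x t > 0
      \<and> \<bar>inst_bw x t / inst_freq x t\<bar> \<le> \<delta>
      \<and> (\<forall>n\<in>{2,3}. norm (nderiv (n - 1) (inst_eta x) t / complex_of_real (inst_freq x t ^ n)) \<le> \<delta> ^ n)
      \<and> w 0 = 1 \<and> w 1 = 0
      \<and> (\<forall>k. even k \<and> k \<ge> 2 \<longrightarrow> norm (w k) \<le> fact k * \<delta> powr (- real k / 2))
      \<and> (\<forall>k. odd k \<and> k \<ge> 3 \<longrightarrow> norm (w k) \<le> fact k * \<delta> powr (- (real k - 1) / 2))
      \<and> C * \<delta> powr (3/2) \<le> 1/2
      \<and> \<bar>z\<bar> \<le> C * \<delta>\<^sup>2)
     \<longrightarrow>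
     (let \<rho> = rho_tilde x t; Z = complex_of_real z in
       summable (\<lambda>m. \<Sum>n\<le>3. \<Sum>p\<le>n. norm (F_term w \<rho> z m n p))
       \<and> norm (F_ser w \<rho> z - F_ser w \<rho> 0
               - (- \<i> * Z * \<rho> 1 * cnj (w 2)
                  - Z * (\<rho> 2 * (cnj (w 2) + cnj (w 3) / 2) - \<i> / 6 * \<rho> 3 * cnj (w 4))
                  + Z\<^sup>2 * cnj (w 2) / 2))
             \<le> K * \<delta> ^ 4))"
  unfolding Let_def
  apply (intro allI impI)
  subgoal for C
    apply (rule exI[of _ "deviation_const C"])
    using scale_deviation_estimate[of C] by (auto simp: deriv3_on_def)
  done

end
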